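(* Let $\eta_1,\eta_2,\dots$ be i.i.d. random variables with common distribution $G$ and let $T_n:=\eta_1+\dots+\eta_n$. Assume $\mathbb E\eta_1=0$ and $\mathbb E|\eta_1|^k<\infty$ for all $k=1,2,\dots$. Let $R$ be the hazard function of $G$, i.e. $\overline G(x)=e^{-R(x)}$, and suppose that for every $\varepsilon>0$ there exists $x_0$ such that $$R(x)/x\le(1+\varepsilon)R(z)/z\quad\text{for all }x\ge z\ge x_0.$$ Then for every $0<\varepsilon<1$ there exists $c=c(\varepsilon)<\infty$ such that $$\Pr\{T_n>x\}\le(n+1)\overline G(y)$$ for all $x>0$, $y\le(1-\varepsilon)x$ and $n$ such that $nR(y)/x^2\le1/c$.
   Context: $\overline G(x):=\Pr\{\eta_1>x\}$. *)

theory Defs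
  imports "HOL-Probability.Probability"
begin

definition tail_fun :: "'a measure \<Rightarrow> ('a \<Rightarrow> real) \<Rightarrow> real \<Rightarrow> real" where
  "tail_fun M X x = measure M {\<omega> \<in> space M. X \<omega> > x}"

end

theory Submission
  imports Defs
begin

text \<open>
  Split according to whether some summand exceeds \<open>y\<close>: by the union bound this costs
  \<open>n Gbar(y)\<close>, and otherwise the sum equals the sum of the truncations \<open>\<zeta>\<^sub>i = min \<eta>\<^sub>i y\<close>.
  The truncated sum is handled by Chernoff's bound with \<open>h = (1 + \<epsilon>/2) R(y) / x\<close>. Since
  \<open>E \<eta> = 0\<close>, \<open>E exp(h\<zeta>) \<le> 1 + h\<^sup>2/2 E[\<zeta>\<^sup>2 exp(h max \<zeta> 0)]\<close>, and this weighted second moment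
  is bounded uniformly in \<open>x\<close>, \<open>y\<close> and \<open>n\<close>. Indeed, beyond a fixed level \<open>x1\<close>, regularity of
  \<open>R(x)/x\<close> together with \<open>y \<le> (1 - \<epsilon>) x\<close> gives \<open>h\<zeta> \<le> (1 - \<epsilon>/4) R(t)\<close> for \<open>\<zeta>\<close> in a band
  \<open>(t, t + 1]\<close>, so the tilt is beaten by \<open>Gbar(t) = exp(-R(t))\<close>; the leftover \<open>exp(-\<epsilon> R(t)/4)\<close>
  decays like \<open>t\<^sup>-\<^sup>4\<close> by Markov's inequality with a moment of order \<open>16/\<epsilon>\<close>, and the bands sum
  like \<open>\<Sum> 1/j\<^sup>2\<close>. Chernoff then bounds the truncated tail by
  \<open>exp(-(1 + \<epsilon>/2) R(y) + n h\<^sup>2 K/2) \<le> Gbar(y)\<close> once \<open>n R(y)/x\<^sup>2 \<le> 1/c\<close>.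
\<close>

lemma exp_le_one_plus_plus_sq:
  fixes u :: real
  shows "exp u \<le> 1 + u + u\<^sup>2 / 2 * exp (max u 0)"
proof (cases "u = 0")
  case True
  then show ?thesis by simp
next
  case False
  have D: "\<forall>m t. DERIV ((\<lambda>n. exp) m) t :> (\<lambda>n. exp) (Suc m) t"
    by (auto intro: DERIV_exp)
  show ?thesis
  proof (cases "u > 0")
    case True
    have "\<exists>t. 0 < t \<and> t < u \<and> exp u = (\<Sum>m<2. exp 0 / fact m * u ^ m) + exp t / fact 2 * u ^ 2"
      by (rule Maclaurin[OF True, of 2 "\<lambda>n. exp" exp]) (use D in auto)
    then obtain t where t: "0 < t" "t < u" "exp u = 1 + u + exp t / 2 * u ^ 2"
      by (auto simp: numeral_2_eq_2)
    have "exp t / 2 * u\<^sup>2 \<le> exp u / 2 * u\<^sup>2"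
      using t(2) by (intro mult_right_mono) auto
    then show ?thesis using t True by (simp add: max_def)
  next
    case False
    then have u: "u < 0" using \<open>u \<noteq> 0\<close> by simp
    have "\<exists>t. u < t \<and> t < 0 \<and> exp u = (\<Sum>m<2. exp 0 / fact m * u ^ m) + exp t / fact 2 * u ^ 2"
      by (rule Maclaurin_minus[OF u, of 2 "\<lambda>n. exp" exp]) (use D in auto)
    then obtain t where t: "u < t" "t < 0" "exp u = 1 + u + exp t / 2 * u ^ 2"
      by (auto simp: numeral_2_eq_2)
    have "exp t / 2 * u\<^sup>2 \<le> 1 / 2 * u\<^sup>2"
      using t(2) by (intro mult_right_mono) auto
    then show ?thesis using t u by (simp add: max_def)
  qed
qed

lemma sum_inverse_squares_le_two: "(\<Sum>j<N. 1 / (real j + 1)\<^sup>2) \<le> 2"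
proof -
  have telescope: "(\<Sum>j<Suc m. 1 / (real j + 1)\<^sup>2) \<le> 2 - 1 / (real m + 1)" for m
  proof (induction m)
    case 0
    then show ?case by simp
  next
    case (Suc m)
    have "1 / (real m + 2)\<^sup>2 \<le> 1 / ((real m + 1) * (real m + 2))"
      by (intro divide_left_mono) (auto simp: power2_eq_square)
    also have "\<dots> = 1 / (real m + 1) - 1 / (real m + 2)"
      by (simp add: field_simps)
    finally show ?case using Suc by (simp add: add.commute)
  qed
  show ?thesis
  proof (cases N)
    case (Suc m)
    then show ?thesis using telescope[of m] by (smt (verit) divide_nonneg_nonneg of_nat_0_le_iff)
  qed simp
qed

lemma cubic_factor_le:
  fixes e :: real
  assumes "0 < e" "e < 1"
  shows "(1 + e/2) * (1 - e) * (1 + e/16) ^ 3 \<le> 1 - e/4"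
proof -
  have cube: "(1 + e/16) ^ 3 \<le> 1 + e/4"
  proof -
    have "(1 + e/16) ^ 3 = 1 + 3 * (e/16) + 3 * (e/16)\<^sup>2 + (e/16) ^ 3"
      by (simp add: power3_eq_cube power2_eq_square field_simps)
    moreover have "(e/16)\<^sup>2 \<le> (e/16) / 16"
      using assms by (simp add: power2_eq_square)
    moreover have "(e/16) ^ 3 \<le> (e/16) / 16"
      using assms by (simp add: power3_eq_cube) (smt (verit) mult_le_one mult_nonneg_nonneg)
    ultimately show ?thesis using assms by linarith
  qed
  have "(1 + e/2) * (1 - e) * (1 + e/16) ^ 3 \<le> (1 - e/2) * (1 + e/4)"
    using cube assms by (intro mult_mono) (auto simp: algebra_simps)
  also have "\<dots> \<le> 1 - e/4"
    using assms by (simp add: algebra_simps)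
  finally show ?thesis .
qed

lemma div_le_shrunk_div:
  fixes a x y \<epsilon> :: real
  assumes "0 < y" "y \<le> (1 - \<epsilon>) * x" "\<epsilon> < 1" "0 \<le> a"
  shows "a / x \<le> (1 - \<epsilon>) * a / y"
proof -
  have "0 < x"
    using assms zero_less_mult_pos[of "1 - \<epsilon>" x] by simp
  have "a * y \<le> a * ((1 - \<epsilon>) * x)"
    using assms by (intro mult_left_mono) auto
  then show ?thesis
    using \<open>0 < x\<close> \<open>0 < y\<close> by (simp add: field_simps)
qed

lemma one_le_if_sq_ratio_small:
  fixes c x r :: real and n :: nat
  assumes "0 < x" "4 \<le> c" "1 \<le> n" "2/3 < r" "real n * r / x\<^sup>2 \<le> 1 / c"
  shows "1 \<le> x"
proof -
  have "c * (real n * r) \<le> x\<^sup>2"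
    using assms by (simp add: field_simps)
  moreover have "2/3 \<le> real n * r"
    using assms mult_mono[of 1 "real n" "2/3" r] by simp
  then have "4 * (2/3) \<le> c * (real n * r)"
    using assms by (intro mult_mono) auto
  ultimately have "1\<^sup>2 \<le> x\<^sup>2"
    by simp
  then show "1 \<le> x"
    by (rule power2_le_imp_le) (use assms in auto)
qed

lemma min_sq_le_sq_plus:
  fixes t y m :: real
  assumes "0 \<le> m" "y < 0 \<Longrightarrow> y\<^sup>2 \<le> 2 * m"
  shows "(min t y)\<^sup>2 \<le> t\<^sup>2 + 2 * m"
proof (cases "t \<le> y")
  case False
  have "y\<^sup>2 \<le> t\<^sup>2 + 2 * m"
  proof (cases "y < 0")
    case True
    then show ?thesis using assms zero_le_power2[of t] by linarith
  next
    case False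
    then have "y\<^sup>2 \<le> t\<^sup>2"
      using \<open>\<not> t \<le> y\<close> by (intro power_mono) auto
    then show ?thesis using assms by linarith
  qed
  then show ?thesis using False by simp
qed (use assms in simp)

locale iid_seq = prob_space M for M :: "'a measure" +
  fixes \<eta> :: "nat \<Rightarrow> 'a \<Rightarrow> real"
  assumes measurable_\<eta> [measurable]: "\<And>i. \<eta> i \<in> borel_measurable M"
    and indep: "indep_vars (\<lambda>_. borel) \<eta> UNIV"
    and ident_distr: "\<And>i. distr M borel (\<eta> i) = distr M borel (\<eta> 0)"
begin

abbreviation Gbar :: "real \<Rightarrow> real" where
  "Gbar \<equiv> tail_fun M (\<eta> 0)"

lemma prob_gt_eq_Gbar: "prob {\<omega> \<in> space M. y < \<eta> i \<omega>} = Gbar y"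
proof -
  have "\<eta> j -` {y<..} \<inter> space M = {\<omega> \<in> space M. y < \<eta> j \<omega>}" for j
    by auto
  moreover have "measure (distr M borel (\<eta> i)) {y<..} = measure (distr M borel (\<eta> 0)) {y<..}"
    using ident_distr[of i] by simp
  ultimately show ?thesis
    by (simp add: tail_fun_def measure_distr)
qed

lemma integral_comp_eq:
  fixes f :: "real \<Rightarrow> real"
  assumes [measurable]: "f \<in> borel_measurable borel"
  shows "expectation (\<lambda>\<omega>. f (\<eta> i \<omega>)) = expectation (\<lambda>\<omega>. f (\<eta> 0 \<omega>))"
proof -
  have "expectation (\<lambda>\<omega>. f (\<eta> i \<omega>)) = integral\<^sup>L (distr M borel (\<eta> i)) f"
    by (rule integral_distr[symmetric]) auto
  also have "\<dots> = integral\<^sup>L (distr M borel (\<eta> 0)) f"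
    using ident_distr[of i] by simp
  also have "\<dots> = expectation (\<lambda>\<omega>. f (\<eta> 0 \<omega>))"
    by (rule integral_distr) auto
  finally show ?thesis .
qed

lemma integrable_exp_truncated:
  assumes "0 \<le> h"
  shows "integrable M (\<lambda>\<omega>. exp (h * min (\<eta> i \<omega>) y))"
proof (rule integrable_const_bound[where B = "exp (h * y)"])
  show "AE \<omega> in M. norm (exp (h * min (\<eta> i \<omega>) y)) \<le> exp (h * y)"
    using assms by (auto intro!: mult_left_mono)
qed simp

lemma chernoff_truncated_sum:
  assumes h: "0 \<le> h"
  shows "prob {\<omega> \<in> space M. x < (\<Sum>i<n. min (\<eta> i \<omega>) y)}
           \<le> exp (- h * x) * expectation (\<lambda>\<omega>. exp (h * min (\<eta> 0 \<omega>) y)) ^ n"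
proof -
  define X where "X i \<omega> = exp (h * min (\<eta> i \<omega>) y)" for i \<omega>
  have [measurable]: "X i \<in> borel_measurable M" for i
    unfolding X_def by measurable
  have indep_X: "indep_vars (\<lambda>_. borel) X {..<n}"
    unfolding X_def by (rule indep_vars_compose2[OF indep_vars_subset[OF indep]]) auto
  have integrable_X: "integrable M (X i)" for i
    unfolding X_def by (rule integrable_exp_truncated[OF h])
  have expectation_X: "expectation (X i) = expectation (X 0)" for i
    unfolding X_def by (rule integral_comp_eq[where f = "\<lambda>t. exp (h * min t y)"]) auto
  have "{\<omega> \<in> space M. x < (\<Sum>i<n. min (\<eta> i \<omega>) y)} \<subseteq> {\<omega> \<in> space M. exp (h * x) \<le> (\<Prod>i<n. X i \<omega>)}"
  proof safe
    fix \<omega> assume "\<omega> \<in> space M" "x < (\<Sum>i<n. min (\<eta> i \<omega>) y)"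
    then have "h * x \<le> h * (\<Sum>i<n. min (\<eta> i \<omega>) y)"
      using h by (intro mult_left_mono) auto
    then have "exp (h * x) \<le> exp (h * (\<Sum>i<n. min (\<eta> i \<omega>) y))"
      by simp
    then show "exp (h * x) \<le> (\<Prod>i<n. X i \<omega>)"
      by (simp add: X_def sum_distrib_left exp_sum)
  qed
  then have "prob {\<omega> \<in> space M. x < (\<Sum>i<n. min (\<eta> i \<omega>) y)}
      \<le> prob {\<omega> \<in> space M. exp (h * x) \<le> (\<Prod>i<n. X i \<omega>)}"
    by (intro finite_measure_mono) auto
  also have "\<dots> \<le> expectation (\<lambda>\<omega>. \<Prod>i<n. X i \<omega>) / exp (h * x)"
  proof (rule integral_Markov_inequality_measure[where A = "space M"])
    show "integrable M (\<lambda>\<omega>. \<Prod>i<n. X i \<omega>)"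
      by (rule indep_vars_integrable[OF _ indep_X]) (auto intro: integrable_X)
  qed (auto intro!: prod_nonneg simp: X_def)
  also have "expectation (\<lambda>\<omega>. \<Prod>i<n. X i \<omega>) = (\<Prod>i<n. expectation (X i))"
    by (rule indep_vars_lebesgue_integral[OF _ indep_X]) (auto intro: integrable_X)
  also have "\<dots> = (\<Prod>i<n. expectation (X 0))"
    by (intro prod.cong refl expectation_X)
  finally show ?thesis
    by (simp add: X_def[abs_def] exp_minus divide_inverse mult.commute)
qed

lemma prob_sum_gt_le_truncated:
  "prob {\<omega> \<in> space M. x < (\<Sum>i<n. \<eta> i \<omega>)}
     \<le> prob {\<omega> \<in> space M. x < (\<Sum>i<n. min (\<eta> i \<omega>) y)} + real n * Gbar y"
proof -
  let ?Z = "{\<omega> \<in> space M. x < (\<Sum>i<n. min (\<eta> i \<omega>) y)}"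
  let ?E = "\<Union>i<n. {\<omega> \<in> space M. y < \<eta> i \<omega>}"
  have "{\<omega> \<in> space M. x < (\<Sum>i<n. \<eta> i \<omega>)} \<subseteq> ?Z \<union> ?E"
  proof
    fix \<omega> assume \<omega>: "\<omega> \<in> {\<omega> \<in> space M. x < (\<Sum>i<n. \<eta> i \<omega>)}"
    show "\<omega> \<in> ?Z \<union> ?E"
    proof (cases "\<exists>i<n. y < \<eta> i \<omega>")
      case False
      then have "(\<Sum>i<n. min (\<eta> i \<omega>) y) = (\<Sum>i<n. \<eta> i \<omega>)"
        by (intro sum.cong) (auto simp: min_def)
      then show ?thesis using \<omega> by auto
    qed (use \<omega> in blast)
  qed
  then have "prob {\<omega> \<in> space M. x < (\<Sum>i<n. \<eta> i \<omega>)} \<le> prob (?Z \<union> ?E)"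
    by (intro finite_measure_mono) auto
  also have "\<dots> \<le> prob ?Z + prob ?E"
    by (rule measure_Un_le) auto
  also have "prob ?E \<le> (\<Sum>i<n. prob {\<omega> \<in> space M. y < \<eta> i \<omega>})"
    by (rule finite_measure_subadditive_finite) auto
  also have "\<dots> = real n * Gbar y"
    by (simp add: prob_gt_eq_Gbar)
  finally show ?thesis by simp
qed

end

locale centered_hazard = iid_seq M \<eta> for M :: "'a measure" and \<eta> +
  fixes R :: "real \<Rightarrow> real"
  assumes mean_zero: "integrable M (\<eta> 0)" "expectation (\<eta> 0) = 0"
    and moments: "\<And>k::nat. 1 \<le> k \<Longrightarrow> integrable M (\<lambda>\<omega>. \<bar>\<eta> 0 \<omega>\<bar> ^ k)"
    and hazard: "\<And>x. Gbar x = exp (- R x)"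
begin

abbreviation moment :: "nat \<Rightarrow> real" where
  "moment k \<equiv> expectation (\<lambda>\<omega>. \<bar>\<eta> 0 \<omega>\<bar> ^ k)"

lemma R_nonneg: "0 \<le> R y"
proof -
  have "exp (- R y) \<le> 1"
    using prob_le_1 by (simp flip: hazard add: tail_fun_def)
  then show ?thesis by simp
qed

lemma R_mono:
  assumes "y \<le> z"
  shows "R y \<le> R z"
proof -
  have "Gbar z \<le> Gbar y"
    unfolding tail_fun_def using assms by (intro finite_measure_mono) auto
  then show ?thesis by (simp add: hazard)
qed

lemma Gbar_le_moment_div_power:
  assumes "1 \<le> k" "0 < t"
  shows "Gbar t \<le> moment k / t ^ k"
proof -
  have "Gbar t \<le> prob {\<omega> \<in> space M. t ^ k \<le> \<bar>\<eta> 0 \<omega>\<bar> ^ k}"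
    unfolding tail_fun_def
  proof (intro finite_measure_mono subsetI)
    fix \<omega> assume "\<omega> \<in> {\<omega> \<in> space M. t < \<eta> 0 \<omega>}"
    then show "\<omega> \<in> {\<omega> \<in> space M. t ^ k \<le> \<bar>\<eta> 0 \<omega>\<bar> ^ k}"
      using assms by (auto intro: power_mono)
  qed simp
  also have "\<dots> \<le> moment k / t ^ k"
    by (rule integral_Markov_inequality_measure[OF moments[OF assms(1)], where A = "space M"])
      (use assms in auto)
  finally show ?thesis .
qed

lemma sq_le_two_moment_if_Gbar_lt_half:
  assumes "Gbar y < 1/2" "y < 0"
  shows "y\<^sup>2 \<le> 2 * moment 2"
proof -
  have "1 - Gbar y = prob {\<omega> \<in> space M. \<eta> 0 \<omega> \<le> y}"
    unfolding tail_fun_def by (subst prob_compl[symmetric]) (auto intro!: arg_cong[where f = prob])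
  also have "\<dots> \<le> prob {\<omega> \<in> space M. y\<^sup>2 \<le> \<bar>\<eta> 0 \<omega>\<bar> ^ 2}"
  proof (intro finite_measure_mono subsetI)
    fix \<omega> assume "\<omega> \<in> {\<omega> \<in> space M. \<eta> 0 \<omega> \<le> y}"
    then have "\<omega> \<in> space M" "\<bar>y\<bar> \<le> \<bar>\<eta> 0 \<omega>\<bar>" using assms by auto
    then show "\<omega> \<in> {\<omega> \<in> space M. y\<^sup>2 \<le> \<bar>\<eta> 0 \<omega>\<bar> ^ 2}"
      by (simp add: abs_le_square_iff)
  qed simp
  also have "\<dots> \<le> moment 2 / y\<^sup>2"
    by (rule integral_Markov_inequality_measure[OF moments[of 2], where A = "space M"])
      (use assms in auto)
  finally have "1/2 < moment 2 / y\<^sup>2"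
    using assms by linarith
  then show ?thesis
    using assms by (simp add: field_simps)
qed

lemma integrable_tilted_sq:
  assumes "0 \<le> h"
  shows "integrable M (\<lambda>\<omega>. (min (\<eta> 0 \<omega>) y)\<^sup>2 * exp (h * max (min (\<eta> 0 \<omega>) y) 0))"
proof (rule Bochner_Integration.integrable_bound
    [where f = "\<lambda>\<omega>. ((\<eta> 0 \<omega>)\<^sup>2 + y\<^sup>2) * exp (h * \<bar>y\<bar>)"])
  show "integrable M (\<lambda>\<omega>. ((\<eta> 0 \<omega>)\<^sup>2 + y\<^sup>2) * exp (h * \<bar>y\<bar>))"
    using moments[of 2] by auto
  show "AE \<omega> in M. norm ((min (\<eta> 0 \<omega>) y)\<^sup>2 * exp (h * max (min (\<eta> 0 \<omega>) y) 0))
      \<le> norm (((\<eta> 0 \<omega>)\<^sup>2 + y\<^sup>2) * exp (h * \<bar>y\<bar>))"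
  proof (intro AE_I2)
    fix \<omega>
    have "(min (\<eta> 0 \<omega>) y)\<^sup>2 \<le> (\<eta> 0 \<omega>)\<^sup>2 + y\<^sup>2"
      by (simp add: min_def)
    moreover have "exp (h * max (min (\<eta> 0 \<omega>) y) 0) \<le> exp (h * \<bar>y\<bar>)"
      using assms by (auto intro!: mult_left_mono)
    ultimately show "norm ((min (\<eta> 0 \<omega>) y)\<^sup>2 * exp (h * max (min (\<eta> 0 \<omega>) y) 0))
        \<le> norm (((\<eta> 0 \<omega>)\<^sup>2 + y\<^sup>2) * exp (h * \<bar>y\<bar>))"
      by (simp add: mult_mono)
  qed
qed simp

text \<open>Truncation only lowers the mean, so the linear term of the expansion of \<open>exp\<close> drops out.\<close>

lemma truncated_mgf_le:
  assumes h: "0 \<le> h"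
    and K: "expectation (\<lambda>\<omega>. (min (\<eta> 0 \<omega>) y)\<^sup>2 * exp (h * max (min (\<eta> 0 \<omega>) y) 0)) \<le> K"
  shows "expectation (\<lambda>\<omega>. exp (h * min (\<eta> 0 \<omega>) y)) \<le> exp (h\<^sup>2 / 2 * K)"
proof -
  let ?z = "\<lambda>\<omega>. min (\<eta> 0 \<omega>) y"
  let ?q = "\<lambda>\<omega>. (min (\<eta> 0 \<omega>) y)\<^sup>2 * exp (h * max (min (\<eta> 0 \<omega>) y) 0)"
  have integrable_z: "integrable M ?z"
    using mean_zero(1) by auto
  have pointwise: "exp (h * ?z \<omega>) \<le> 1 + h * ?z \<omega> + h\<^sup>2 / 2 * ?q \<omega>" for \<omega>
  proof -
    have "max (h * ?z \<omega>) 0 = h * max (?z \<omega>) 0"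
      using h by (simp add: max_mult_distrib_left)
    then show ?thesis
      using exp_le_one_plus_plus_sq[of "h * ?z \<omega>"] by (simp add: power_mult_distrib)
  qed
  have "expectation ?z \<le> expectation (\<eta> 0)"
    using integrable_z mean_zero(1) by (intro integral_mono) auto
  then have linear_term: "h * expectation ?z \<le> 0"
    using mean_zero(2) h by (simp add: mult_nonneg_nonpos)
  have "expectation (\<lambda>\<omega>. exp (h * ?z \<omega>)) \<le> expectation (\<lambda>\<omega>. 1 + h * ?z \<omega> + h\<^sup>2 / 2 * ?q \<omega>)"
    using integrable_exp_truncated[OF h] integrable_z integrable_tilted_sq[OF h] pointwise
    by (intro integral_mono) auto
  also have "\<dots> = 1 + h * expectation ?z + h\<^sup>2 / 2 * expectation ?q"
    using integrable_z integrable_tilted_sq[OF h] by (simp add: prob_space)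
  also have "\<dots> \<le> 1 + h\<^sup>2 / 2 * K"
    using linear_term mult_left_mono[OF K, of "h\<^sup>2 / 2"] by simp
  also have "\<dots> \<le> exp (h\<^sup>2 / 2 * K)"
    using exp_ge_add_one_self by (simp add: add.commute)
  finally show ?thesis .
qed

text \<open>
  An upper bound for \<open>\<zeta>\<^sup>2 exp(h\<zeta>)\<close> on the band \<open>(x1 + j, x1 + j + 1]\<close> when \<open>h\<zeta> \<le> \<kappa> R(\<zeta>)\<close>.
\<close>

definition band_weight :: "real \<Rightarrow> real \<Rightarrow> nat \<Rightarrow> real" where
  "band_weight x1 \<kappa> j = (x1 + real j + 1)\<^sup>2 * exp (\<kappa> * R (x1 + real j + 1))"

lemma band_weight_nonneg: "0 \<le> band_weight x1 \<kappa> j"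
  by (simp add: band_weight_def)

lemma tilted_sq_le_band_weight:
  assumes x1: "1 \<le> x1" and \<theta>: "0 \<le> \<theta>" and e1: "0 \<le> e1"
    and reg: "\<And>x z. z \<le> x \<Longrightarrow> x1 \<le> z \<Longrightarrow> R x / x \<le> (1 + e1) * R z / z"
    and z: "x1 < z" "z \<le> y"
    and h: "h \<le> \<theta> * R y / y"
  shows "\<exists>j < nat \<lceil>y - x1\<rceil>. x1 + real j < z \<and> z\<^sup>2 * exp (h * z) \<le> band_weight x1 (\<theta> * (1 + e1)) j"
proof -
  define j where "j = nat \<lceil>z - x1\<rceil> - 1"
  have "0 < \<lceil>z - x1\<rceil>"
    using z by simp
  then have j1: "1 \<le> nat \<lceil>z - x1\<rceil>"
    by linarith
  then have "real j = real (nat \<lceil>z - x1\<rceil>) - 1"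
    by (simp add: j_def)
  then have j_def': "real j = real_of_int \<lceil>z - x1\<rceil> - 1"
    using z by simp
  have band: "x1 + real j < z" "z \<le> x1 + real j + 1"
    using j_def' by linarith+
  have "nat \<lceil>z - x1\<rceil> \<le> nat \<lceil>y - x1\<rceil>"
    using z by (intro nat_mono ceiling_mono) simp
  then have "j < nat \<lceil>y - x1\<rceil>"
    using j1 unfolding j_def by linarith
  moreover have "h * z \<le> \<theta> * (1 + e1) * R (x1 + real j + 1)"
  proof -
    have "h * z \<le> \<theta> * R y / y * z"
      using h z x1 by (intro mult_right_mono) auto
    also have "\<dots> = \<theta> * (R y / y * z)"
      by simp
    also have "\<dots> \<le> \<theta> * ((1 + e1) * R z / z * z)"
      using reg[OF z(2)] z x1 \<theta> by (intro mult_left_mono mult_right_mono) auto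
    also have "\<dots> = \<theta> * (1 + e1) * R z"
      using z x1 by simp
    also have "\<dots> \<le> \<theta> * (1 + e1) * R (x1 + real j + 1)"
      using R_mono[OF band(2)] \<theta> e1 by (intro mult_left_mono) auto
    finally show ?thesis .
  qed
  then have "z\<^sup>2 * exp (h * z) \<le> band_weight x1 (\<theta> * (1 + e1)) j"
    unfolding band_weight_def using band z x1 by (intro mult_mono power_mono) auto
  ultimately show ?thesis
    using band by blast
qed

lemma tilted_sq_pointwise_le:
  assumes x1: "1 \<le> x1" and \<theta>: "0 \<le> \<theta>" and e1: "0 \<le> e1"
    and reg: "\<And>x z. z \<le> x \<Longrightarrow> x1 \<le> z \<Longrightarrow> R x / x \<le> (1 + e1) * R z / z"
    and h: "0 \<le> h" "h * x1 \<le> B"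
    and h_large: "x1 < y \<Longrightarrow> h \<le> \<theta> * R y / y"
    and y_neg: "y < 0 \<Longrightarrow> y\<^sup>2 \<le> 2 * moment 2"
  shows "(min t y)\<^sup>2 * exp (h * max (min t y) 0)
    \<le> exp B * (t\<^sup>2 + 2 * moment 2)
      + (\<Sum>j<nat \<lceil>y - x1\<rceil>. band_weight x1 (\<theta> * (1 + e1)) j * indicator {x1 + real j<..} t)"
    (is "?q \<le> ?moment_part + ?band_part")
proof -
  define z where "z = min t y"
  have "0 \<le> moment 2" by simp
  have "0 \<le> ?band_part"
    by (intro sum_nonneg) (simp add: band_weight_nonneg)
  show ?thesis
  proof (cases "max z 0 \<le> x1")
    case True
    have "z\<^sup>2 \<le> t\<^sup>2 + 2 * moment 2"
      unfolding z_def using \<open>0 \<le> moment 2\<close> y_neg by (rule min_sq_le_sq_plus)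
    moreover have "exp (h * max z 0) \<le> exp B"
      using True h by (simp add: order.trans[OF mult_left_mono])
    ultimately have "?q \<le> (t\<^sup>2 + 2 * moment 2) * exp B"
      unfolding z_def[symmetric] by (intro mult_mono) auto
    then show ?thesis
      using \<open>0 \<le> ?band_part\<close> by (simp add: mult.commute)
  next
    case False
    then have z: "x1 < z" "z \<le> y" "z \<le> t"
      using x1 by (auto simp: z_def max_def split: if_splits)
    obtain j where j: "j < nat \<lceil>y - x1\<rceil>" "x1 + real j < z"
      and weight: "z\<^sup>2 * exp (h * z) \<le> band_weight x1 (\<theta> * (1 + e1)) j"
      using tilted_sq_le_band_weight[OF x1 \<theta> e1 reg z(1,2) h_large] z by auto
    have "?q = z\<^sup>2 * exp (h * z)"
      using z x1 by (simp add: z_def[symmetric] max_def)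
    also have "\<dots> \<le> band_weight x1 (\<theta> * (1 + e1)) j * indicator {x1 + real j<..} t"
      using weight j z by simp
    also have "\<dots> \<le> ?band_part"
      using j by (intro member_le_sum) (auto simp: band_weight_nonneg)
    finally show ?thesis
      using \<open>0 \<le> moment 2\<close> by (smt (verit) exp_gt_zero mult_nonneg_nonneg zero_le_power2)
  qed
qed

lemma tilted_sq_le_band_sum:
  assumes x1: "1 \<le> x1" and \<theta>: "0 \<le> \<theta>" and e1: "0 \<le> e1"
    and reg: "\<And>x z. z \<le> x \<Longrightarrow> x1 \<le> z \<Longrightarrow> R x / x \<le> (1 + e1) * R z / z"
    and h: "0 \<le> h" "h * x1 \<le> B"
    and h_large: "x1 < y \<Longrightarrow> h \<le> \<theta> * R y / y"
    and y_neg: "y < 0 \<Longrightarrow> y\<^sup>2 \<le> 2 * moment 2"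
  shows "expectation (\<lambda>\<omega>. (min (\<eta> 0 \<omega>) y)\<^sup>2 * exp (h * max (min (\<eta> 0 \<omega>) y) 0))
    \<le> exp B * (3 * moment 2) + (\<Sum>j<nat \<lceil>y - x1\<rceil>. band_weight x1 (\<theta> * (1 + e1)) j * Gbar (x1 + real j))"
proof -
  define N where "N = nat \<lceil>y - x1\<rceil>"
  define b where "b = band_weight x1 (\<theta> * (1 + e1))"
  define A where "A j = {\<omega> \<in> space M. x1 + real j < \<eta> 0 \<omega>}" for j
  have [measurable]: "A j \<in> sets M" for j
    unfolding A_def by measurable
  let ?moment_part = "\<lambda>\<omega>. exp B * ((\<eta> 0 \<omega>)\<^sup>2 + 2 * moment 2)"
  let ?band_part = "\<lambda>\<omega>. \<Sum>j<N. b j * indicator (A j) \<omega>"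
  have integrable_moment: "integrable M ?moment_part"
    using moments[of 2] by simp
  have integrable_band: "integrable M (\<lambda>\<omega>. b j * indicator (A j) \<omega>)" for j
    by (intro integrable_mult_right integrable_real_indicator) (auto simp: less_top[symmetric])
  have integral_band: "expectation (\<lambda>\<omega>. b j * indicator (A j) \<omega>) = b j * Gbar (x1 + real j)" for j
  proof -
    have "A j \<inter> space M = A j"
      using sets.sets_into_space[of "A j" M] by auto
    then show ?thesis
      by (simp add: A_def tail_fun_def)
  qed
  have "expectation (\<lambda>\<omega>. (min (\<eta> 0 \<omega>) y)\<^sup>2 * exp (h * max (min (\<eta> 0 \<omega>) y) 0))
      \<le> expectation (\<lambda>\<omega>. ?moment_part \<omega> + ?band_part \<omega>)"
  proof (intro integral_mono_AE integrable_tilted_sq[OF h(1)] AE_I2 impI)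
    show "integrable M (\<lambda>\<omega>. ?moment_part \<omega> + ?band_part \<omega>)"
      by (intro Bochner_Integration.integrable_add Bochner_Integration.integrable_sum
          integrable_moment integrable_band)
    fix \<omega> assume "\<omega> \<in> space M"
    then have "indicator (A j) \<omega> = (indicator {x1 + real j<..} (\<eta> 0 \<omega>) :: real)" for j
      by (simp add: A_def indicator_def)
    then have "?band_part \<omega> = (\<Sum>j<N. b j * indicator {x1 + real j<..} (\<eta> 0 \<omega>))"
      by simp
    then show "(min (\<eta> 0 \<omega>) y)\<^sup>2 * exp (h * max (min (\<eta> 0 \<omega>) y) 0) \<le> ?moment_part \<omega> + ?band_part \<omega>"
      unfolding N_def b_def using tilted_sq_pointwise_le[OF x1 \<theta> e1 reg h h_large y_neg] by simp
  qed
  also have "\<dots> = expectation ?moment_part + expectation ?band_part"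
    by (intro Bochner_Integration.integral_add integrable_moment
        Bochner_Integration.integrable_sum integrable_band)
  also have "expectation ?band_part = (\<Sum>j<N. expectation (\<lambda>\<omega>. b j * indicator (A j) \<omega>))"
    by (intro Bochner_Integration.integral_sum integrable_band)
  also have "expectation ?moment_part = exp B * (3 * moment 2)"
    using moments[of 2] by (simp add: prob_space)
  also have "(\<Sum>j<N. expectation (\<lambda>\<omega>. b j * indicator (A j) \<omega>)) = (\<Sum>j<N. b j * Gbar (x1 + real j))"
    by (intro sum.cong refl integral_band)
  finally show ?thesis
    by (simp add: N_def b_def)
qed

lemma R_succ_le:
  assumes e: "0 < e" and x1: "16 / e \<le> x1"
    and reg: "\<And>x z. z \<le> x \<Longrightarrow> x1 \<le> z \<Longrightarrow> R x / x \<le> (1 + e/16) * R z / z"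
    and t: "x1 \<le> t"
  shows "R (t + 1) \<le> (1 + e/16)\<^sup>2 * R t"
proof -
  have "0 < x1"
    using e x1 by (smt (verit) divide_pos_pos)
  then have "0 < t" using t by simp
  have "R (t + 1) \<le> (1 + e/16) * R t * ((t + 1) / t)"
    using reg[of t "t + 1"] t \<open>0 < t\<close> by (simp add: field_simps)
  also have "(t + 1) / t \<le> 1 + e/16"
  proof -
    have "1 / t \<le> 1 / x1"
      using t \<open>0 < x1\<close> by (intro divide_left_mono) auto
    also have "\<dots> \<le> e / 16"
      using x1 e \<open>0 < x1\<close> by (simp add: field_simps)
    finally show ?thesis
      using \<open>0 < t\<close> by (simp add: add_divide_distrib)
  qed
  then have "(1 + e/16) * R t * ((t + 1) / t) \<le> (1 + e/16) * R t * (1 + e/16)"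
    using e R_nonneg[of t] by (intro mult_left_mono) auto
  finally show ?thesis
    by (simp add: power2_eq_square mult_ac)
qed

lemma minus_R_le_log_moment:
  assumes "1 \<le> k" "1 \<le> t"
  shows "- R t \<le> ln (moment k + 1) - real k * ln t"
proof -
  have "0 \<le> moment k" by simp
  then have "0 < moment k + 1" by linarith
  have "Gbar t \<le> moment k / t ^ k"
    using Gbar_le_moment_div_power assms by simp
  also have "\<dots> \<le> (moment k + 1) / t ^ k"
    using assms by (intro divide_right_mono) auto
  finally have "exp (- R t) \<le> (moment k + 1) / t ^ k"
    by (simp add: hazard)
  moreover have "0 < (moment k + 1) / t ^ k"
    using \<open>0 < moment k + 1\<close> assms by simp
  ultimately have "- R t \<le> ln ((moment k + 1) / t ^ k)"
    using ln_ge_iff by blast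
  then show ?thesis
    using \<open>0 < moment k + 1\<close> assms by (simp add: ln_div ln_realpow)
qed

text \<open>
  The band weight carries \<open>exp(\<kappa> R(t + 1))\<close> with \<open>\<kappa> (1 + e/16)\<^sup>2 \<le> 1 - e/4\<close>, so against
  \<open>Gbar t = exp(-R t)\<close> only \<open>exp(-e R(t)/4)\<close> survives, which Markov's inequality of order
  \<open>k \<ge> 16/e\<close> turns into \<open>O(t\<^sup>-\<^sup>4)\<close>.
\<close>

lemma band_weight_times_Gbar_le:
  assumes e: "0 < e" "e < 1" and x1: "1 \<le> x1" "16 / e \<le> x1"
    and reg: "\<And>x z. z \<le> x \<Longrightarrow> x1 \<le> z \<Longrightarrow> R x / x \<le> (1 + e/16) * R z / z"
    and k: "1 \<le> k" "4 \<le> e / 4 * real k"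
  shows "band_weight x1 ((1 + e/2) * (1 - e) * (1 + e/16)) j * Gbar (x1 + real j)
     \<le> 4 * exp (e / 4 * ln (moment k + 1)) / (real j + 1)\<^sup>2"
proof -
  define t where "t = x1 + real j"
  define \<kappa> where "\<kappa> = (1 + e/2) * (1 - e) * (1 + e/16)"
  define L where "L = ln (moment k + 1)"
  have t: "1 \<le> t" "x1 \<le> t" "real j + 1 \<le> t"
    using x1 by (auto simp: t_def)
  have "\<kappa> * R (t + 1) \<le> \<kappa> * ((1 + e/16)\<^sup>2 * R t)"
    using R_succ_le[OF e(1) x1(2) reg t(2)] e by (intro mult_left_mono) (auto simp: \<kappa>_def)
  also have "\<dots> = ((1 + e/2) * (1 - e) * (1 + e/16) ^ 3) * R t"
    by (simp add: \<kappa>_def power2_eq_square power3_eq_cube)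
  also have "\<dots> \<le> (1 - e/4) * R t"
    using cubic_factor_le[OF e] R_nonneg[of t] by (intro mult_right_mono) auto
  finally have "\<kappa> * R (t + 1) - R t \<le> e/4 * (- R t)"
    by (simp add: algebra_simps)
  also have "\<dots> \<le> e/4 * L - (e/4 * real k) * ln t"
    using mult_left_mono[OF minus_R_le_log_moment[OF k(1) t(1)], of "e/4"] e
    by (simp add: L_def algebra_simps)
  also have "\<dots> \<le> e/4 * L - 4 * ln t"
    using k(2) t(1) by (simp add: mult_right_mono)
  finally have "exp (\<kappa> * R (t + 1)) * Gbar t \<le> exp (e/4 * L - 4 * ln t)"
    by (simp add: hazard flip: exp_add)
  also have "\<dots> = exp (e/4 * L) / t ^ 4"
    using exp_of_nat_mult[of 4 "ln t"] t(1) by (simp add: exp_diff)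
  finally have tilt: "exp (\<kappa> * R (t + 1)) * Gbar t \<le> exp (e/4 * L) / t ^ 4" .
  have "(t + 1)\<^sup>2 \<le> (2 * t)\<^sup>2"
    using t by (intro power_mono) auto
  then have "(t + 1)\<^sup>2 * (exp (\<kappa> * R (t + 1)) * Gbar t) \<le> (4 * t\<^sup>2) * (exp (e/4 * L) / t ^ 4)"
    using tilt by (intro mult_mono) (auto simp: hazard power_mult_distrib)
  also have "\<dots> = 4 * exp (e/4 * L) / t\<^sup>2"
    using t by (simp add: power2_eq_square power4_eq_xxxx)
  also have "\<dots> \<le> 4 * exp (e/4 * L) / (real j + 1)\<^sup>2"
    using t by (intro divide_left_mono power_mono) auto
  finally show ?thesis
    by (simp add: band_weight_def t_def \<kappa>_def L_def mult_ac)
qed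

lemma tilted_sq_bounded:
  assumes e: "0 < \<epsilon>" "\<epsilon> < 1" and x1: "1 \<le> x1" "16 / \<epsilon> \<le> x1"
    and reg: "\<And>x z. z \<le> x \<Longrightarrow> x1 \<le> z \<Longrightarrow> R x / x \<le> (1 + \<epsilon>/16) * R z / z"
  obtains K where "0 \<le> K"
    and "\<And>h y. 0 \<le> h \<Longrightarrow> h * x1 \<le> 2 * R x1 * x1
           \<Longrightarrow> (x1 < y \<Longrightarrow> h \<le> (1 + \<epsilon>/2) * (1 - \<epsilon>) * R y / y)
           \<Longrightarrow> (y < 0 \<Longrightarrow> y\<^sup>2 \<le> 2 * moment 2)
           \<Longrightarrow> expectation (\<lambda>\<omega>. (min (\<eta> 0 \<omega>) y)\<^sup>2 * exp (h * max (min (\<eta> 0 \<omega>) y) 0)) \<le> K"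
proof
  define k where "k = nat \<lceil>16 / \<epsilon>\<rceil>"
  have "16 / \<epsilon> \<le> real k"
    unfolding k_def by linarith
  moreover have "1 < 16 / \<epsilon>"
    using e by (simp add: field_simps)
  ultimately have "1 \<le> k"
    by simp
  have "16 \<le> \<epsilon> * real k"
    using \<open>16 / \<epsilon> \<le> real k\<close> e by (simp add: field_simps)
  then have k: "1 \<le> k" "4 \<le> \<epsilon> / 4 * real k"
    using \<open>1 \<le> k\<close> by simp_all
  define A where "A = 4 * exp (\<epsilon> / 4 * ln (moment k + 1))"
  show "0 \<le> exp (2 * R x1 * x1) * (3 * moment 2) + 2 * A"
    by (simp add: A_def)
  fix h y
  assume h: "0 \<le> h" "h * x1 \<le> 2 * R x1 * x1"
    and h_large: "x1 < y \<Longrightarrow> h \<le> (1 + \<epsilon>/2) * (1 - \<epsilon>) * R y / y"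
    and y_neg: "y < 0 \<Longrightarrow> y\<^sup>2 \<le> 2 * moment 2"
  have "expectation (\<lambda>\<omega>. (min (\<eta> 0 \<omega>) y)\<^sup>2 * exp (h * max (min (\<eta> 0 \<omega>) y) 0))
      \<le> exp (2 * R x1 * x1) * (3 * moment 2)
        + (\<Sum>j<nat \<lceil>y - x1\<rceil>. band_weight x1 ((1 + \<epsilon>/2) * (1 - \<epsilon>) * (1 + \<epsilon>/16)) j * Gbar (x1 + real j))"
    by (rule tilted_sq_le_band_sum[OF x1(1) _ _ reg h h_large y_neg]) (use e in auto)
  also have "\<dots> \<le> exp (2 * R x1 * x1) * (3 * moment 2) + (\<Sum>j<nat \<lceil>y - x1\<rceil>. A * (1 / (real j + 1)\<^sup>2))"
    using band_weight_times_Gbar_le[OF e x1 reg k] by (intro add_left_mono sum_mono) (simp add: A_def)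
  also have "\<dots> = exp (2 * R x1 * x1) * (3 * moment 2) + A * (\<Sum>j<nat \<lceil>y - x1\<rceil>. 1 / (real j + 1)\<^sup>2)"
    by (simp only: sum_distrib_left)
  also have "\<dots> \<le> exp (2 * R x1 * x1) * (3 * moment 2) + A * 2"
    using sum_inverse_squares_le_two by (intro add_left_mono mult_left_mono) (auto simp: A_def)
  finally show "expectation (\<lambda>\<omega>. (min (\<eta> 0 \<omega>) y)\<^sup>2 * exp (h * max (min (\<eta> 0 \<omega>) y) 0))
      \<le> exp (2 * R x1 * x1) * (3 * moment 2) + 2 * A"
    by simp
qed

lemma tilt_times_x1_le:
  assumes e: "0 < \<epsilon>" "\<epsilon> < 1" and x1: "1 \<le> x1"
    and reg: "\<And>x z. z \<le> x \<Longrightarrow> x1 \<le> z \<Longrightarrow> R x / x \<le> (1 + \<epsilon>/16) * R z / z"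
    and x: "1 \<le> x" "y \<le> (1 - \<epsilon>) * x"
  shows "(1 + \<epsilon>/2) * R y / x * x1 \<le> 2 * R x1 * x1"
proof -
  have "(1 + \<epsilon>/2) * R y / x \<le> 2 * R x1"
  proof (cases "x1 < y")
    case True
    have "(1 + \<epsilon>/2) * R y / x \<le> (1 - \<epsilon>) * ((1 + \<epsilon>/2) * R y) / y"
      using True x1 x e R_nonneg[of y] by (intro div_le_shrunk_div) auto
    also have "\<dots> = ((1 - \<epsilon>) * (1 + \<epsilon>/2)) * (R y / y)"
      by simp
    also have "\<dots> \<le> 1 * (R y / y)"
      using True x1 e R_nonneg[of y] by (intro mult_right_mono) (auto simp: algebra_simps)
    also have "\<dots> \<le> (1 + \<epsilon>/16) * R x1 / x1"
      using reg[of x1 y] True by simp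
    also have "\<dots> \<le> (1 + \<epsilon>/16) * R x1 / 1"
      using e x1 R_nonneg[of x1] by (intro frac_le) auto
    also have "\<dots> \<le> 2 * R x1"
      using e R_nonneg[of x1] by (simp add: mult_right_mono)
    finally show ?thesis .
  next
    case False
    have "(1 + \<epsilon>/2) * R y / x \<le> (1 + \<epsilon>/2) * R x1 / 1"
      using R_mono[of y x1] R_nonneg[of y] False e x
      by (intro frac_le mult_left_mono) auto
    also have "\<dots> \<le> 2 * R x1"
      using e R_nonneg[of x1] by (simp add: mult_right_mono)
    finally show ?thesis .
  qed
  then show ?thesis
    using x1 by (intro mult_right_mono) auto
qed

lemma truncated_sum_tail_le_Gbar:
  assumes "0 < \<delta>" "0 < x" "0 < c" "0 \<le> K" and c: "(1 + \<delta>)\<^sup>2 * K \<le> 2 * \<delta> * c"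
    and small: "real n * R y / x\<^sup>2 \<le> 1 / c"
    and K: "expectation (\<lambda>\<omega>. (min (\<eta> 0 \<omega>) y)\<^sup>2 * exp ((1 + \<delta>) * R y / x * max (min (\<eta> 0 \<omega>) y) 0)) \<le> K"
  shows "prob {\<omega> \<in> space M. x < (\<Sum>i<n. min (\<eta> i \<omega>) y)} \<le> Gbar y"
proof -
  define h where "h = (1 + \<delta>) * R y / x"
  have "0 \<le> h"
    using assms R_nonneg[of y] by (simp add: h_def)
  have "real n * (h\<^sup>2 / 2 * K) = (1 + \<delta>)\<^sup>2 * K / 2 * R y * (real n * R y / x\<^sup>2)"
    using \<open>0 < x\<close> by (simp add: h_def power2_eq_square field_simps)
  also have "\<dots> \<le> (1 + \<delta>)\<^sup>2 * K / 2 * R y * (1 / c)"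
    using small assms R_nonneg[of y] by (intro mult_left_mono) auto
  also have "\<dots> = ((1 + \<delta>)\<^sup>2 * K / (2 * c)) * R y"
    by simp
  also have "\<dots> \<le> \<delta> * R y"
    using c assms R_nonneg[of y] by (intro mult_right_mono) (simp_all add: field_simps)
  finally have quadratic_term: "real n * (h\<^sup>2 / 2 * K) \<le> \<delta> * R y" .
  have "h * x = R y + \<delta> * R y"
    using \<open>0 < x\<close> by (simp add: h_def field_simps)
  then have exponent: "- h * x + real n * (h\<^sup>2 / 2 * K) \<le> - R y"
    using quadratic_term by linarith
  have "prob {\<omega> \<in> space M. x < (\<Sum>i<n. min (\<eta> i \<omega>) y)}
      \<le> exp (- h * x) * expectation (\<lambda>\<omega>. exp (h * min (\<eta> 0 \<omega>) y)) ^ n"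
    by (rule chernoff_truncated_sum[OF \<open>0 \<le> h\<close>])
  also have "\<dots> \<le> exp (- h * x) * exp (h\<^sup>2 / 2 * K) ^ n"
    using truncated_mgf_le[OF \<open>0 \<le> h\<close>] K by (intro mult_left_mono power_mono) (auto simp: h_def)
  also have "\<dots> = exp (- h * x + real n * (h\<^sup>2 / 2 * K))"
    by (simp only: exp_of_nat_mult[symmetric] exp_add)
  also have "\<dots> \<le> Gbar y"
    using exponent by (simp add: hazard)
  finally show ?thesis .
qed

lemma sum_tail_le:
  assumes e: "0 < \<epsilon>" "\<epsilon> < 1" and x1: "1 \<le> x1"
    and reg: "\<And>x z. z \<le> x \<Longrightarrow> x1 \<le> z \<Longrightarrow> R x / x \<le> (1 + \<epsilon>/16) * R z / z"
    and K: "\<And>h y. 0 \<le> h \<Longrightarrow> h * x1 \<le> 2 * R x1 * x1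
           \<Longrightarrow> (x1 < y \<Longrightarrow> h \<le> (1 + \<epsilon>/2) * (1 - \<epsilon>) * R y / y)
           \<Longrightarrow> (y < 0 \<Longrightarrow> y\<^sup>2 \<le> 2 * moment 2)
           \<Longrightarrow> expectation (\<lambda>\<omega>. (min (\<eta> 0 \<omega>) y)\<^sup>2 * exp (h * max (min (\<eta> 0 \<omega>) y) 0)) \<le> K"
    and "0 \<le> K" and c: "4 \<le> c" "(1 + \<epsilon>/2)\<^sup>2 * K \<le> 2 * (\<epsilon>/2) * c"
    and x: "0 < x" "y \<le> (1 - \<epsilon>) * x" and small: "real n * R y / x\<^sup>2 \<le> 1 / c"
  shows "prob {\<omega> \<in> space M. x < (\<Sum>i<n. \<eta> i \<omega>)} \<le> (real n + 1) * Gbar y"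
proof (cases "n = 0 \<or> 1 \<le> (real n + 1) * Gbar y")
  case True
  then show ?thesis
  proof
    assume "n = 0"
    then show ?thesis
      using x by (simp add: hazard)
  next
    assume "1 \<le> (real n + 1) * Gbar y"
    then show ?thesis
      using prob_le_1[of "{\<omega> \<in> space M. x < (\<Sum>i<n. \<eta> i \<omega>)}"] by linarith
  qed
next
  case False
  then have "1 \<le> n" and small_tail: "(real n + 1) * Gbar y < 1"
    by auto
  have "2 * Gbar y \<le> (real n + 1) * Gbar y"
    using \<open>1 \<le> n\<close> by (intro mult_right_mono) (auto simp: hazard)
  then have "Gbar y < 1/2"
    using small_tail by simp
  then have "exp (- R y) < exp (- ln 2)"
    by (simp add: hazard exp_minus)
  then have "2/3 < R y"
    using ln2_ge_two_thirds by simp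
  then have "1 \<le> x"
    using one_le_if_sq_ratio_small x(1) c(1) \<open>1 \<le> n\<close> small by blast
  have h_large: "(1 + \<epsilon>/2) * R y / x \<le> (1 + \<epsilon>/2) * (1 - \<epsilon>) * R y / y" if "x1 < y"
    using div_le_shrunk_div[of y \<epsilon> x "(1 + \<epsilon>/2) * R y"] that x1 x e R_nonneg[of y]
    by (simp add: mult_ac)
  have "expectation (\<lambda>\<omega>. (min (\<eta> 0 \<omega>) y)\<^sup>2 * exp ((1 + \<epsilon>/2) * R y / x * max (min (\<eta> 0 \<omega>) y) 0)) \<le> K"
    using tilt_times_x1_le[OF e x1 reg \<open>1 \<le> x\<close> x(2)] h_large
      sq_le_two_moment_if_Gbar_lt_half[OF \<open>Gbar y < 1/2\<close>] x e R_nonneg[of y]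
    by (intro K) auto
  then have "prob {\<omega> \<in> space M. x < (\<Sum>i<n. min (\<eta> i \<omega>) y)} \<le> Gbar y"
    using e x c \<open>0 \<le> K\<close> small by (intro truncated_sum_tail_le_Gbar) auto
  then show ?thesis
    using prob_sum_gt_le_truncated[of x n y] by (simp add: algebra_simps)
qed

lemma tail_bound:
  assumes regular: "\<And>\<epsilon>::real. \<epsilon> > 0 \<Longrightarrow> \<exists>x0. \<forall>x z. x \<ge> z \<and> z \<ge> x0 \<longrightarrow>
                    R x / x \<le> (1 + \<epsilon>) * R z / z"
    and e: "0 < \<epsilon>" "\<epsilon> < 1"
  shows "\<exists>c::real. c > 0 \<and>
           (\<forall>x y::real. \<forall>n::nat. x > 0 \<and> y \<le> (1 - \<epsilon>) * x \<and> real n * R y / x\<^sup>2 \<le> 1 / c \<longrightarrow>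
              prob {\<omega> \<in> space M. (\<Sum>i<n. \<eta> i \<omega>) > x} \<le> (real n + 1) * Gbar y)"
proof -
  obtain x0 where x0: "\<forall>x z. x \<ge> z \<and> z \<ge> x0 \<longrightarrow> R x / x \<le> (1 + \<epsilon>/16) * R z / z"
    using regular[of "\<epsilon>/16"] e by auto
  define x1 where "x1 = max (max x0 (16 / \<epsilon>)) 1"
  have x1: "1 \<le> x1" "16 / \<epsilon> \<le> x1" "x0 \<le> x1"
    by (auto simp: x1_def)
  have reg: "\<And>x z. z \<le> x \<Longrightarrow> x1 \<le> z \<Longrightarrow> R x / x \<le> (1 + \<epsilon>/16) * R z / z"
    using x0 x1(3) by force
  obtain K where "0 \<le> K" and K: "\<And>h y. 0 \<le> h \<Longrightarrow> h * x1 \<le> 2 * R x1 * x1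
           \<Longrightarrow> (x1 < y \<Longrightarrow> h \<le> (1 + \<epsilon>/2) * (1 - \<epsilon>) * R y / y)
           \<Longrightarrow> (y < 0 \<Longrightarrow> y\<^sup>2 \<le> 2 * moment 2)
           \<Longrightarrow> expectation (\<lambda>\<omega>. (min (\<eta> 0 \<omega>) y)\<^sup>2 * exp (h * max (min (\<eta> 0 \<omega>) y) 0)) \<le> K"
    using tilted_sq_bounded[OF e x1(1,2) reg] by blast
  define c where "c = max 4 ((1 + \<epsilon>/2)\<^sup>2 * K / \<epsilon> + 1)"
  have "4 \<le> c" "(1 + \<epsilon>/2)\<^sup>2 * K / \<epsilon> \<le> c"
    by (simp_all add: c_def)
  then have c: "4 \<le> c" "(1 + \<epsilon>/2)\<^sup>2 * K \<le> 2 * (\<epsilon>/2) * c"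
    using e by (simp_all add: field_simps)
  show ?thesis
    using sum_tail_le[OF e x1(1) reg K \<open>0 \<le> K\<close> c] c(1) by (intro exI[of _ c]) auto
qed

end

theorem proposition3:
  fixes M :: "'a measure" and \<eta> :: "nat \<Rightarrow> 'a \<Rightarrow> real" and R :: "real \<Rightarrow> real"
  assumes "prob_space M"
    and meas: "\<And>i. \<eta> i \<in> borel_measurable M"
    and indep: "prob_space.indep_vars M (\<lambda>_. borel) \<eta> UNIV"
    and ident: "\<And>i. distr M borel (\<eta> i) = distr M borel (\<eta> 0)"
    and mean0: "integrable M (\<eta> 0)" "integral\<^sup>L M (\<eta> 0) = 0"
    and moments: "\<And>k::nat. k \<ge> 1 \<Longrightarrow> integrable M (\<lambda>\<omega>. \<bar>\<eta> 0 \<omega>\<bar> ^ k)"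
    and hazard: "\<And>x. tail_fun M (\<eta> 0) x = exp (- R x)"
    and regular: "\<And>\<epsilon>::real. \<epsilon> > 0 \<Longrightarrow> \<exists>x0. \<forall>x z. x \<ge> z \<and> z \<ge> x0 \<longrightarrow>
                    R x / x \<le> (1 + \<epsilon>) * R z / z"
  shows "\<forall>\<epsilon>::real. 0 < \<epsilon> \<and> \<epsilon> < 1 \<longrightarrow> (\<exists>c::real. c > 0 \<and>
           (\<forall>x y::real. \<forall>n::nat. x > 0 \<and> y \<le> (1 - \<epsilon>) * x \<and> real n * R y / x\<^sup>2 \<le> 1 / c \<longrightarrow>
              measure M {\<omega> \<in> space M. (\<Sum>i<n. \<eta> i \<omega>) > x}
                \<le> (real n + 1) * tail_fun M (\<eta> 0) y))"
proof -
  interpret centered_hazard M \<eta> R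
    by (rule centered_hazard.intro[OF iid_seq.intro[OF assms(1)]]; unfold_locales) (use assms in auto)
  show ?thesis
    using tail_bound[OF regular] by blast
qed

end
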